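(* Assume $\mathrm{recc}(C)\subseteq\mathrm{recc}(P^B)$. Fix $k\in N_2$ and assume $N_0\not\subseteq J$. Fix $\hat x\in P^B$. Then the set function $g:2^{M'}\to\mathbb{R}$, $$g(S)=\sum_{i\in S}\hat x_i-\sum_{j\in N\setminus J}\frac{\hat x_j}{\varepsilon'_j(S)},$$ is supermodular. Hence $\max_{S\subseteq M'}g(S)$ is a supermodular maximization problem.
   Context: Let $A\in\mathbb{R}^{m\times n}$ have full row rank, $b\in\mathbb{R}^m$, and $P=\{x\in\mathbb{R}^n_+:Ax=b\}$. Let $C\subseteq\mathbb{R}^n$ be an open convex set. Fix a basis $B$ of $P$ with nonbasic set $N=\{1,\dots,n\}\setminus B$. Write $P=\{x:x_i=\bar b_i-\sum_{j\in N}\bar a_{ij}x_j\ (i\in B),\ x\ge0\}$ with $\bar b\ge0$. The basic solution $\bar x$ has $\bar x_i=\bar b_i$ ($i\in B$) and $0$ ($i\in N$). $P^B$ is obtained by dropping $x_i\ge0$ for $i\in B$. For $j\in N$, $\bar r^j$ has $\bar r^j_k=-\bar a_{kj}$ ($k\in B$), $\bar r^j_j=1$, and $0$ otherwise. Thus $P^B=\{\bar x+\sum_{j\in N}x_j\bar r^j:x_j\ge0\}$. It is assumed that $\bar x\notin\mathrm{cl}(C)$. For $j\in N$, $\alpha_j=\inf\{\lambda\ge0:\bar x+\lambda\bar r^j\in C\}$ and $\beta_j=\sup\{\lambda\ge0:\bar x+\lambda\bar r^j\in C\}$, with $\alpha_j=+\infty$, $\beta_j=-\infty$ if the halfline misses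 $C$. Define - $N_0=\{j:\alpha_j=+\infty,\beta_j=-\infty\}$; - $N_2=\{j:\alpha_j\in(0,\infty),\beta_j\in(\alpha_j,\infty)\}$. For a set $K$, $\mathrm{recc}(K)=\{d:x+\lambda d\in K\ \forall x\in K,\lambda\ge0\}$. We use the convention $t/+\infty=0$. For $k\in N_2$, $S_k^C=\{\bar x\}+\mathrm{conv}\big(\bigcup_{j\in N_2}\{\lambda\bar r^j:0\le\lambda<\beta_j\}\big)+\{\lambda\bar r^k:\lambda\le0\}+\mathrm{recc}(C)$. Let $J=\{i\in N:\bar r^i\in\mathrm{recc}(S_k^C)\}$. For $i\in J$, $j\in N\setminus J$, $\gamma'_{ij}=\sup\{\gamma\ge0:\bar r^i+\gamma\bar r^j\in\mathrm{recc}(S_k^C)\}$. Let $M'=\{i\in J:\gamma'_{ij}>0\ \forall j\in N\setminus J\}$. Finally, $\varepsilon'_j(S)=\min_{i\in S}\gamma'_{ij}$ for $S\ne\emptyset$ and $\varepsilon'_j(\emptyset)=+\infty$. *)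

theory Defs
  imports "HOL-Analysis.Analysis"
begin

text \<open>Simplex-tableau data for a basis B (index type 'n, N = UNIV - B).
  abar i j and bbar i are the tableau coefficients.\<close>

definition basic_sol :: "'n::finite set \<Rightarrow> ('n \<Rightarrow> real) \<Rightarrow> real^'n" where
  "basic_sol B bbar = (\<chi> i. if i \<in> B then bbar i else 0)"

definition ray :: "'n::finite set \<Rightarrow> ('n \<Rightarrow> 'n \<Rightarrow> real) \<Rightarrow> 'n \<Rightarrow> real^'n" where
  "ray B abar j = (\<chi> k. if k \<in> B then - abar k j else if k = j then 1 else 0)"

text \<open>P^B: the polyhedron obtained by dropping nonnegativity of basic variables.\<close>
definition PB :: "'n::finite set \<Rightarrow> ('n \<Rightarrow> 'n \<Rightarrow> real) \<Rightarrow> ('n \<Rightarrow> real) \<Rightarrow> (real^'n) set" where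
  "PB B abar bbar = {basic_sol B bbar + (\<Sum>j\<in>-B. t j *\<^sub>R ray B abar j) | t. \<forall>j\<in>-B. t j \<ge> 0}"

definition recc :: "(real^'n) set \<Rightarrow> (real^'n) set" where
  "recc K = {d. \<forall>x\<in>K. \<forall>l::real. l \<ge> 0 \<longrightarrow> x + l *\<^sub>R d \<in> K}"

text \<open>alpha/beta as extended reals: Inf {} = +\<infinity>, Sup {} = -\<infinity> in ereal,
  matching the conventions of the paper.\<close>
definition alpha :: "(real^'n) set \<Rightarrow> real^'n \<Rightarrow> real^'n \<Rightarrow> ereal" where
  "alpha C x r = Inf (ereal ` {l. l \<ge> 0 \<and> x + l *\<^sub>R r \<in> C})"

definition beta :: "(real^'n) set \<Rightarrow> real^'n \<Rightarrow> real^'n \<Rightarrow> ereal" where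
  "beta C x r = Sup (ereal ` {l. l \<ge> 0 \<and> x + l *\<^sub>R r \<in> C})"

definition N0 :: "(real^'n::finite) set \<Rightarrow> 'n set \<Rightarrow> ('n \<Rightarrow> 'n \<Rightarrow> real) \<Rightarrow> ('n \<Rightarrow> real) \<Rightarrow> 'n set" where
  "N0 C B abar bbar = {j \<in> -B. alpha C (basic_sol B bbar) (ray B abar j) = \<infinity>
                              \<and> beta C (basic_sol B bbar) (ray B abar j) = -\<infinity>}"

definition N2 :: "(real^'n::finite) set \<Rightarrow> 'n set \<Rightarrow> ('n \<Rightarrow> 'n \<Rightarrow> real) \<Rightarrow> ('n \<Rightarrow> real) \<Rightarrow> 'n set" where
  "N2 C B abar bbar = {j \<in> -B.
     (let a = alpha C (basic_sol B bbar) (ray B abar j); b = beta C (basic_sol B bbar) (ray B abar j)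
      in 0 < a \<and> a < \<infinity> \<and> a < b \<and> b < \<infinity>)}"

definition SkC :: "(real^'n::finite) set \<Rightarrow> 'n set \<Rightarrow> ('n \<Rightarrow> 'n \<Rightarrow> real) \<Rightarrow> ('n \<Rightarrow> real) \<Rightarrow> 'n \<Rightarrow> (real^'n) set" where
  "SkC C B abar bbar k =
     {basic_sol B bbar + u + \<mu> *\<^sub>R ray B abar k + d | u \<mu> d.
        u \<in> convex hull (\<Union>j\<in>N2 C B abar bbar.
               {l *\<^sub>R ray B abar j | l. 0 \<le> l \<and> ereal l < beta C (basic_sol B bbar) (ray B abar j)})
        \<and> \<mu> \<le> 0 \<and> d \<in> recc C}"

definition Jset :: "(real^'n::finite) set \<Rightarrow> 'n set \<Rightarrow> ('n \<Rightarrow> 'n \<Rightarrow> real) \<Rightarrow> ('n \<Rightarrow> real) \<Rightarrow> 'n \<Rightarrow> 'n set" where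
  "Jset C B abar bbar k = {i \<in> -B. ray B abar i \<in> recc (SkC C B abar bbar k)}"

definition gamma' :: "(real^'n::finite) set \<Rightarrow> 'n set \<Rightarrow> ('n \<Rightarrow> 'n \<Rightarrow> real) \<Rightarrow> ('n \<Rightarrow> real) \<Rightarrow> 'n \<Rightarrow> 'n \<Rightarrow> 'n \<Rightarrow> ereal" where
  "gamma' C B abar bbar k i j =
     Sup (ereal ` {\<gamma>. \<gamma> \<ge> 0 \<and> ray B abar i + \<gamma> *\<^sub>R ray B abar j \<in> recc (SkC C B abar bbar k)})"

definition M' :: "(real^'n::finite) set \<Rightarrow> 'n set \<Rightarrow> ('n \<Rightarrow> 'n \<Rightarrow> real) \<Rightarrow> ('n \<Rightarrow> real) \<Rightarrow> 'n \<Rightarrow> 'n set" where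
  "M' C B abar bbar k = {i \<in> Jset C B abar bbar k.
      \<forall>j \<in> -B - Jset C B abar bbar k. gamma' C B abar bbar k i j > 0}"

text \<open>epsilon'_j(S) = min_{i in S} gamma'_{ij}; Inf {} = +\<infinity> in ereal.\<close>
definition eps' :: "(real^'n::finite) set \<Rightarrow> 'n set \<Rightarrow> ('n \<Rightarrow> 'n \<Rightarrow> real) \<Rightarrow> ('n \<Rightarrow> real) \<Rightarrow> 'n \<Rightarrow> 'n \<Rightarrow> 'n set \<Rightarrow> ereal" where
  "eps' C B abar bbar k j S = Inf ((\<lambda>i. gamma' C B abar bbar k i j) ` S)"

definition div_ext :: "real \<Rightarrow> ereal \<Rightarrow> real" where
  "div_ext t e = (if e = \<infinity> then 0 else t / real_of_ereal e)"

definition gfun :: "(real^'n::finite) set \<Rightarrow> 'n set \<Rightarrow> ('n \<Rightarrow> 'n \<Rightarrow> real) \<Rightarrow> ('n \<Rightarrow> real) \<Rightarrow> 'n \<Rightarrow> real^'n \<Rightarrow> 'n set \<Rightarrow> real" where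
  "gfun C B abar bbar k xh S =
     (\<Sum>i\<in>S. xh $ i) - (\<Sum>j\<in>-B - Jset C B abar bbar k. div_ext (xh $ j) (eps' C B abar bbar k j S))"

definition supermodular_on :: "'a set \<Rightarrow> ('a set \<Rightarrow> real) \<Rightarrow> bool" where
  "supermodular_on M g \<longleftrightarrow>
     (\<forall>S T. S \<subseteq> M \<longrightarrow> T \<subseteq> M \<longrightarrow> g S + g T \<le> g (S \<union> T) + g (S \<inter> T))"

end

theory Submission
  imports Defs
begin

text \<open>A modular function minus a sum of submodular ones is supermodular. Each subtracted
  term has the form \<open>x / min\<^sub>i\<^sub>\<in>\<^sub>S \<gamma>\<^sub>i\<close> with \<open>x \<ge> 0\<close> and all \<open>\<gamma>\<^sub>i > 0\<close>: the minimum over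
  \<open>S \<union> T\<close> is the smaller of the minima over \<open>S\<close> and \<open>T\<close>, while the minimum over \<open>S \<inter> T\<close> is at
  least the larger one, so the term at \<open>S \<union> T\<close> is the larger of its values at \<open>S\<close> and \<open>T\<close> and
  the term at \<open>S \<inter> T\<close> is at most the smaller one. Only the positivity of \<open>\<gamma>'\<close> on \<open>M'\<close> and the
  nonnegativity of the nonbasic coordinates of points of \<open>P\<^sup>B\<close> are needed.\<close>

lemma supermodular_on_modular:
  fixes w :: "'a \<Rightarrow> real"
  assumes "finite M"
  shows "supermodular_on M (\<lambda>S. \<Sum>i\<in>S. w i)"
  unfolding supermodular_on_def
  by (metis assms finite_subset order.refl sum.union_inter)

lemma supermodular_on_add:
  assumes "supermodular_on M f" "supermodular_on M g"
  shows "supermodular_on M (\<lambda>S. f S + g S)"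
  using assms unfolding supermodular_on_def by (smt (verit) add_mono)

lemma supermodular_on_sum:
  assumes "\<And>j. j \<in> K \<Longrightarrow> supermodular_on M (h j)"
  shows "supermodular_on M (\<lambda>S. \<Sum>j\<in>K. h j S)"
  unfolding supermodular_on_def
proof (intro allI impI)
  fix S T assume "S \<subseteq> M" "T \<subseteq> M"
  then have "h j S + h j T \<le> h j (S \<union> T) + h j (S \<inter> T)" if "j \<in> K" for j
    using assms[OF that] unfolding supermodular_on_def by blast
  then show "(\<Sum>j\<in>K. h j S) + (\<Sum>j\<in>K. h j T) \<le> (\<Sum>j\<in>K. h j (S \<union> T)) + (\<Sum>j\<in>K. h j (S \<inter> T))"
    unfolding sum.distrib[symmetric] by (rule sum_mono)
qed

lemma div_ext_antimono:
  assumes "0 \<le> x" "0 < a" "a \<le> b"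
  shows "div_ext x b \<le> div_ext x a"
proof (cases b)
  case (real rb)
  with assms obtain ra where "a = ereal ra" "0 < ra" "ra \<le> rb"
    by (cases a) auto
  with real assms show ?thesis by (simp add: div_ext_def frac_le)
next
  case PInf
  with assms show ?thesis by (cases a) (auto simp: div_ext_def)
qed (use assms in simp)

lemma INF_pos_finite:
  fixes f :: "'a \<Rightarrow> ereal"
  assumes "finite S" "\<And>i. i \<in> S \<Longrightarrow> 0 < f i"
  shows "0 < (INF i\<in>S. f i)"
proof (cases "S = {}")
  case False
  with assms show ?thesis by (simp add: finite_less_Inf_iff)
qed (simp add: top_ereal_def)

lemma supermodular_on_neg_div_ext_INF:
  fixes f :: "'a \<Rightarrow> ereal"
  assumes "finite M" "\<And>i. i \<in> M \<Longrightarrow> 0 < f i" "0 \<le> x"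
  shows "supermodular_on M (\<lambda>S. - div_ext x (INF i\<in>S. f i))"
  unfolding supermodular_on_def
proof (intro allI impI)
  fix S T assume "S \<subseteq> M" "T \<subseteq> M"
  let ?m = "\<lambda>U. INF i\<in>U. f i"
  have pos: "0 < ?m S" "0 < ?m T"
    using \<open>S \<subseteq> M\<close> \<open>T \<subseteq> M\<close> assms
    by (meson INF_pos_finite finite_subset subsetD)+
  have union: "?m (S \<union> T) = min (?m S) (?m T)"
    by (simp add: INF_union inf_min)
  have inter: "div_ext x (?m (S \<inter> T)) \<le> div_ext x (?m S)"
              "div_ext x (?m (S \<inter> T)) \<le> div_ext x (?m T)"
    using pos \<open>0 \<le> x\<close> by (auto intro!: div_ext_antimono INF_superset_mono)
  show "- div_ext x (?m S) + - div_ext x (?m T)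
        \<le> - div_ext x (?m (S \<union> T)) + - div_ext x (?m (S \<inter> T))"
    using inter unfolding union min_def by auto
qed

lemma PB_nonbasic_nonneg:
  assumes "x \<in> PB B abar bbar" "j \<notin> B"
  shows "0 \<le> x $ j"
proof -
  obtain t where x: "x = basic_sol B bbar + (\<Sum>l\<in>-B. t l *\<^sub>R ray B abar l)"
    and t: "\<forall>l\<in>-B. 0 \<le> t l"
    using assms(1) unfolding PB_def by blast
  have "(\<Sum>l\<in>-B. t l *\<^sub>R ray B abar l) $ j = t j"
    using assms(2) by (simp add: ray_def if_distrib[of "(*) _"] cong: if_cong)
  with x t assms(2) show ?thesis by (simp add: basic_sol_def)
qed

theorem proposition9:
  fixes A :: "real^'n::finite^'m::finite" and b :: "real^'m"
    and C :: "(real^'n) set"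
    and B :: "'n set" and abar :: "'n \<Rightarrow> 'n \<Rightarrow> real" and bbar :: "'n \<Rightarrow> real"
    and k :: 'n and xh :: "real^'n"
  assumes full_row_rank: "rank A = CARD('m)"
    and C_open: "open C" and C_convex: "convex C"
    and B_basis: "card B = CARD('m)" "inj_on (\<lambda>j. column j A) B"
                 "independent ((\<lambda>j. column j A) ` B)"
    and tableau: "\<And>x. A *v x = b \<longleftrightarrow> (\<forall>i\<in>B. x $ i = bbar i - (\<Sum>j\<in>-B. abar i j * x $ j))"
    and bbar_nonneg: "\<And>i. i \<in> B \<Longrightarrow> bbar i \<ge> 0"
    and xbar_not_cl: "basic_sol B bbar \<notin> closure C"
    and recc_sub: "recc C \<subseteq> recc (PB B abar bbar)"
    and k_N2: "k \<in> N2 C B abar bbar"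
    and N0_not_J: "\<not> N0 C B abar bbar \<subseteq> Jset C B abar bbar k"
    and xh_PB: "xh \<in> PB B abar bbar"
  shows "supermodular_on (M' C B abar bbar k) (gfun C B abar bbar k xh)"
proof -
  let ?M = "M' C B abar bbar k" and ?N = "-B - Jset C B abar bbar k"
  let ?\<gamma> = "gamma' C B abar bbar k"
  have g: "gfun C B abar bbar k xh =
        (\<lambda>S. (\<Sum>i\<in>S. xh $ i) + (\<Sum>j\<in>?N. - div_ext (xh $ j) (INF i\<in>S. ?\<gamma> i j)))"
    by (simp add: fun_eq_iff gfun_def eps'_def sum_negf)
  have "supermodular_on ?M (\<lambda>S. - div_ext (xh $ j) (INF i\<in>S. ?\<gamma> i j))"
    if "j \<in> ?N" for j
    using that PB_nonbasic_nonneg[OF xh_PB]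
    by (intro supermodular_on_neg_div_ext_INF) (auto simp: M'_def)
  then show ?thesis
    unfolding g by (intro supermodular_on_add supermodular_on_modular supermodular_on_sum) auto
qed

end
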